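(* Let $\alpha_2,\alpha_3,k$ be positive integers with $\alpha_2,\alpha_3$ coprime, and let $X_1=\{x+x^ky^{k-1}+z^{\alpha_2}+t^{\alpha_3}=0\}\subset\mathbb{A}^4=\mathrm{Spec}(\mathbb{C}[x,y,z,t])$ with the $\mathbb{G}_m$-action induced by $\lambda\cdot(x,y,z,t)=(\lambda^{\alpha_2\alpha_3}x,\lambda^{-\alpha_2\alpha_3}y,\lambda^{\alpha_3}z,\lambda^{\alpha_2}t)$. Let $d\ge2$ be an integer with $d\alpha_3$ and $\alpha_2$ coprime, and let $X_2=\{x+y^{d-1}(x^d+z^{\alpha_2})+t^{\alpha_3}=0\}\subset\mathbb{A}^4$ with the $\mathbb{G}_m$-action induced by $\lambda\cdot(x,y,z,t)=(\lambda^{\alpha_2\alpha_3}x,\lambda^{-\alpha_2\alpha_3}y,\lambda^{d\alpha_3}z,\lambda^{\alpha_2}t)$. Then $X_1$ and $X_2$ are $\mathbb{G}_m$-linearly rational.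
   Context: Each of these hyperbolic $\mathbb{G}_m$-varieties has the origin as its unique fixed point. A $\mathbb{G}_m$-variety with a unique fixed point $x_0$ is $\mathbb{G}_m$-linearly rational if there exist a $\mathbb{G}_m$-stable open neighborhood $U$ of $x_0$, a linear $\mathbb{G}_m$-representation $V\simeq\mathbb{A}^n$ and a $\mathbb{G}_m$-stable open subset $U'\subset V$ such that $U$ is $\mathbb{G}_m$-equivariantly isomorphic to $U'$. *)

theory Defs
  imports Complex_Main "HOL-Computational_Algebra.Polynomial"
begin

text \<open>Complex affine n-space: points are functions nat => complex vanishing from index n on.\<close>
definition aff :: "nat \<Rightarrow> (nat \<Rightarrow> complex) set" where
  "aff n = {p. \<forall>i\<ge>n. p i = 0}"

inductive_set polyfun :: "nat \<Rightarrow> ((nat \<Rightarrow> complex) \<Rightarrow> complex) set" for n :: nat where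
  pf_const: "(\<lambda>p. c) \<in> polyfun n"
| pf_var: "i < n \<Longrightarrow> (\<lambda>p. p i) \<in> polyfun n"
| pf_add: "f \<in> polyfun n \<Longrightarrow> g \<in> polyfun n \<Longrightarrow> (\<lambda>p. f p + g p) \<in> polyfun n"
| pf_mult: "f \<in> polyfun n \<Longrightarrow> g \<in> polyfun n \<Longrightarrow> (\<lambda>p. f p * g p) \<in> polyfun n"

definition zariski_open :: "nat \<Rightarrow> (nat \<Rightarrow> complex) set \<Rightarrow> bool" where
  "zariski_open n W \<longleftrightarrow>
     (\<exists>S \<subseteq> polyfun n. W = aff n - {q \<in> aff n. \<forall>s\<in>S. s q = 0})"

definition regular_on :: "nat \<Rightarrow> (nat \<Rightarrow> complex) set \<Rightarrow> ((nat \<Rightarrow> complex) \<Rightarrow> complex) \<Rightarrow> bool" where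
  "regular_on n U f \<longleftrightarrow>
     (\<forall>p\<in>U. \<exists>g h W. g \<in> polyfun n \<and> h \<in> polyfun n \<and> zariski_open n W \<and> p \<in> W \<and>
        (\<forall>q\<in>U \<inter> W. h q \<noteq> 0 \<and> f q = g q / h q))"

definition regular_map :: "nat \<Rightarrow> nat \<Rightarrow> (nat \<Rightarrow> complex) set \<Rightarrow>
    ((nat \<Rightarrow> complex) \<Rightarrow> (nat \<Rightarrow> complex)) \<Rightarrow> bool" where
  "regular_map n m U F \<longleftrightarrow> (\<forall>i<m. regular_on n U (\<lambda>q. F q i)) \<and> (\<forall>q\<in>U. F q \<in> aff m)"

text \<open>Linear (algebraic) representations of G_m on C^m: matrix entries are Laurent
  polynomials in lambda, and the group laws hold.\<close>
definition lin_gm_rep :: "nat \<Rightarrow> (complex \<Rightarrow> (nat \<Rightarrow> complex) \<Rightarrow> (nat \<Rightarrow> complex)) \<Rightarrow> bool" where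
  "lin_gm_rep m \<rho> \<longleftrightarrow>
     (\<exists>(N::nat) (P :: nat \<Rightarrow> nat \<Rightarrow> complex poly).
        \<forall>l. l \<noteq> 0 \<longrightarrow> (\<forall>v\<in>aff m.
          \<rho> l v = (\<lambda>i. if i < m then (\<Sum>j<m. (poly (P i j) l / l ^ N) * v j) else 0)))
     \<and> (\<forall>v\<in>aff m. \<rho> 1 v = v)
     \<and> (\<forall>l u v. l \<noteq> 0 \<longrightarrow> u \<noteq> 0 \<longrightarrow> v \<in> aff m \<longrightarrow> \<rho> (l * u) v = \<rho> l (\<rho> u v))"

definition gm_linearly_rational ::
  "nat \<Rightarrow> (nat \<Rightarrow> complex) set \<Rightarrow> (complex \<Rightarrow> (nat \<Rightarrow> complex) \<Rightarrow> (nat \<Rightarrow> complex))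
     \<Rightarrow> (nat \<Rightarrow> complex) \<Rightarrow> bool" where
  "gm_linearly_rational n X act x0 \<longleftrightarrow>
     (\<exists>U W. zariski_open n W \<and> U = X \<inter> W \<and> x0 \<in> U \<and>
        (\<forall>l p. l \<noteq> 0 \<longrightarrow> p \<in> U \<longrightarrow> act l p \<in> U) \<and>
      (\<exists>m \<rho> U' \<phi> \<psi>. lin_gm_rep m \<rho> \<and> zariski_open m U' \<and>
        (\<forall>l v. l \<noteq> 0 \<longrightarrow> v \<in> U' \<longrightarrow> \<rho> l v \<in> U') \<and>
        regular_map n m U \<phi> \<and> regular_map m n U' \<psi> \<and>
        \<phi> ` U \<subseteq> U' \<and> \<psi> ` U' \<subseteq> U \<and>
        (\<forall>p\<in>U. \<psi> (\<phi> p) = p) \<and> (\<forall>v\<in>U'. \<phi> (\<psi> v) = v) \<and>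
        (\<forall>l p. l \<noteq> 0 \<longrightarrow> p \<in> U \<longrightarrow> \<phi> (act l p) = \<rho> l (\<phi> p))))"

text \<open>Diagonal action on C^4 with integer weights (w0,w1,w2,w3); coordinates x,y,z,t = p 0..p 3.\<close>
definition diag4 :: "int \<Rightarrow> int \<Rightarrow> int \<Rightarrow> int \<Rightarrow> complex \<Rightarrow> (nat \<Rightarrow> complex) \<Rightarrow> (nat \<Rightarrow> complex)" where
  "diag4 w0 w1 w2 w3 l p = (\<lambda>i. if i = 0 then l powi w0 * p 0 else if i = 1 then l powi w1 * p 1
      else if i = 2 then l powi w2 * p 2 else if i = 3 then l powi w3 * p 3 else 0)"

definition X1 :: "nat \<Rightarrow> nat \<Rightarrow> nat \<Rightarrow> (nat \<Rightarrow> complex) set" where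
  "X1 a2 a3 k = {p \<in> aff 4. p 0 + p 0 ^ k * p 1 ^ (k - 1) + p 2 ^ a2 + p 3 ^ a3 = 0}"

definition X2 :: "nat \<Rightarrow> nat \<Rightarrow> nat \<Rightarrow> (nat \<Rightarrow> complex) set" where
  "X2 a2 a3 d = {p \<in> aff 4. p 0 + p 1 ^ (d - 1) * (p 0 ^ d + p 2 ^ a2) + p 3 ^ a3 = 0}"

definition origin :: "nat \<Rightarrow> complex" where "origin = (\<lambda>i. 0)"

end

theory Submission
  imports Defs
begin

text \<open>
  Both varieties are hypersurfaces x f(xy) + y^m z^a2 + t^a3 = 0 with f(0) \<noteq> 0 (for X1, m = 0 and
  f = 1 + s^(k-1); for X2, m = d - 1 and f = 1 + s^(d-1)). On the invariant open set where
  c = f(xy) \<noteq> 0 the equation can be solved for x = -(y^m z^a2 + t^a3)/c. Pick integers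
  \<alpha>, \<beta>, \<gamma> with (m+1)\<alpha> + a2 \<beta> = -1 and \<alpha> + a3 \<gamma> = -1, possible by coprimality of (m+1)a3 and a2.
  The twisted coordinates u = y c^\<alpha>, v = z c^\<beta>, w = t c^\<gamma> are semi-invariants of the same weights
  as y, z, t, and they satisfy xy = -(u^(m+1) v^a2 + u w^a3). So c is a polynomial in u, v, w,
  and (u, v, w) is an equivariant isomorphism of the chart onto the open subset of the linear
  representation where that polynomial does not vanish.
\<close>

lemma polyfun_power: "g \<in> polyfun n \<Longrightarrow> (\<lambda>p. g p ^ k) \<in> polyfun n"
  by (induction k) (auto intro: polyfun.intros)

lemma polyfun_uminus: "g \<in> polyfun n \<Longrightarrow> (\<lambda>p. - g p) \<in> polyfun n"
  using pf_mult[OF pf_const[of "-1"]] by simp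

lemma polyfun_poly: "g \<in> polyfun n \<Longrightarrow> (\<lambda>p. poly f (g p)) \<in> polyfun n"
  by (induction f) (auto intro: polyfun.intros)

lemma zariski_open_nonzero: "h \<in> polyfun n \<Longrightarrow> zariski_open n {q \<in> aff n. h q \<noteq> 0}"
  unfolding zariski_open_def by (rule exI[of _ "{h}"]) auto

lemma zariski_open_aff: "zariski_open n (aff n)"
  using zariski_open_nonzero[OF pf_const[of 1]] by simp

definition rational_on :: "nat \<Rightarrow> (nat \<Rightarrow> complex) set \<Rightarrow> ((nat \<Rightarrow> complex) \<Rightarrow> complex) \<Rightarrow> bool" where
  "rational_on n U g \<longleftrightarrow>
     (\<exists>a b. a \<in> polyfun n \<and> b \<in> polyfun n \<and> (\<forall>q\<in>U. b q \<noteq> 0 \<and> g q = a q / b q))"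

lemma rational_on_polyfun: "g \<in> polyfun n \<Longrightarrow> rational_on n U g"
  unfolding rational_on_def by (rule exI[of _ g], rule exI[of _ "\<lambda>p. 1"]) (auto intro: polyfun.intros)

lemma rational_on_const: "rational_on n U (\<lambda>p. c)"
  by (rule rational_on_polyfun) (rule pf_const)

lemma rational_on_var: "i < n \<Longrightarrow> rational_on n U (\<lambda>p. p i)"
  by (rule rational_on_polyfun) (rule pf_var)

lemma rational_on_add:
  assumes "rational_on n U g" and "rational_on n U h"
  shows "rational_on n U (\<lambda>p. g p + h p)"
proof -
  obtain a b c d where "a \<in> polyfun n" "b \<in> polyfun n" "\<forall>q\<in>U. b q \<noteq> 0 \<and> g q = a q / b q"
      "c \<in> polyfun n" "d \<in> polyfun n" "\<forall>q\<in>U. d q \<noteq> 0 \<and> h q = c q / d q"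
    using assms unfolding rational_on_def by metis
  then show ?thesis unfolding rational_on_def
    by (intro exI[of _ "\<lambda>p. a p * d p + c p * b p"] exI[of _ "\<lambda>p. b p * d p"])
       (auto intro!: polyfun.intros simp: field_simps)
qed

lemma rational_on_mult:
  assumes "rational_on n U g" and "rational_on n U h"
  shows "rational_on n U (\<lambda>p. g p * h p)"
proof -
  obtain a b c d where "a \<in> polyfun n" "b \<in> polyfun n" "\<forall>q\<in>U. b q \<noteq> 0 \<and> g q = a q / b q"
      "c \<in> polyfun n" "d \<in> polyfun n" "\<forall>q\<in>U. d q \<noteq> 0 \<and> h q = c q / d q"
    using assms unfolding rational_on_def by metis
  then show ?thesis unfolding rational_on_def
    by (intro exI[of _ "\<lambda>p. a p * c p"] exI[of _ "\<lambda>p. b p * d p"])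
       (auto intro!: polyfun.intros)
qed

lemma rational_on_inverse:
  assumes "rational_on n U g" and "\<forall>q\<in>U. g q \<noteq> 0"
  shows "rational_on n U (\<lambda>p. inverse (g p))"
proof -
  obtain a b where "a \<in> polyfun n" "b \<in> polyfun n" "\<forall>q\<in>U. b q \<noteq> 0 \<and> g q = a q / b q"
    using assms(1) unfolding rational_on_def by metis
  then show ?thesis unfolding rational_on_def
    using assms(2) by (intro exI[of _ b] exI[of _ a]) auto
qed

lemma rational_on_divide:
  "rational_on n U g \<Longrightarrow> rational_on n U h \<Longrightarrow> \<forall>q\<in>U. h q \<noteq> 0 \<Longrightarrow> rational_on n U (\<lambda>p. g p / h p)"
  using rational_on_mult[OF _ rational_on_inverse] by (simp add: divide_inverse)

lemma rational_on_uminus: "rational_on n U g \<Longrightarrow> rational_on n U (\<lambda>p. - g p)"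
  using rational_on_mult[OF rational_on_const[of n U "-1"]] by simp

lemma rational_on_power: "rational_on n U g \<Longrightarrow> rational_on n U (\<lambda>p. g p ^ k)"
  by (induction k) (auto intro: rational_on_mult rational_on_const)

lemma rational_on_power_int:
  "rational_on n U g \<Longrightarrow> \<forall>q\<in>U. g q \<noteq> 0 \<Longrightarrow> rational_on n U (\<lambda>p. g p powi k)"
  unfolding power_int_def
  by (cases "k \<ge> 0") (auto intro: rational_on_power rational_on_inverse simp flip: power_inverse)

lemma rational_on_poly: "rational_on n U g \<Longrightarrow> rational_on n U (\<lambda>p. poly f (g p))"
  by (induction f) (auto intro: rational_on_add rational_on_mult rational_on_const)

lemma regular_map_rational:
  assumes "U \<subseteq> aff n" and "\<And>i. i < m \<Longrightarrow> rational_on n U (\<lambda>q. F q i)" and "\<And>q. q \<in> U \<Longrightarrow> F q \<in> aff m"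
  shows "regular_map n m U F"
  using assms zariski_open_aff unfolding regular_map_def regular_on_def rational_on_def by blast

definition diag3 :: "int \<Rightarrow> int \<Rightarrow> int \<Rightarrow> complex \<Rightarrow> (nat \<Rightarrow> complex) \<Rightarrow> (nat \<Rightarrow> complex)" where
  "diag3 w0 w1 w2 l v = (\<lambda>i. if i = 0 then l powi w0 * v 0 else if i = 1 then l powi w1 * v 1
      else if i = 2 then l powi w2 * v 2 else 0)"

lemma power_nat_shift:
  assumes "(l::complex) \<noteq> 0" and "w + int N \<ge> 0"
  shows "l ^ nat (w + int N) = l powi w * l ^ N"
proof -
  have "l ^ nat (w + int N) = l powi (w + int N)"
    using assms(2) by (simp add: power_int_def)
  also have "\<dots> = l powi w * l ^ N"
    using assms(1) by (simp add: power_int_add)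
  finally show ?thesis .
qed

lemma lin_gm_rep_diag3: "lin_gm_rep 3 (diag3 w0 w1 w2)"
proof -
  \<comment> \<open>\<open>N\<close> clears denominators: each entry \<open>l powi wt\<close> becomes a polynomial in \<open>l\<close> over \<open>l ^ N\<close>.\<close>
  define N where "N = nat \<bar>w0\<bar> + nat \<bar>w1\<bar> + nat \<bar>w2\<bar>"
  define wt where "wt i = (if i = 0 then w0 else if i = (1::nat) then w1 else w2)" for i
  define P where "P i j = (if i = j then monom 1 (nat (wt i + int N)) else (0::complex poly))" for i j
  have "diag3 w0 w1 w2 l v = (\<lambda>i. if i < 3 then (\<Sum>j<3. (poly (P i j) l / l ^ N) * v j) else 0)"
    if l: "l \<noteq> 0" for l v
  proof
    fix i
    have "wt i + int N \<ge> 0"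
      by (auto simp: wt_def N_def)
    then have "poly (P i i) l = l powi wt i * l ^ N"
      using power_nat_shift[OF l] by (simp add: P_def poly_monom)
    then show "diag3 w0 w1 w2 l v i = (if i < 3 then (\<Sum>j<3. (poly (P i j) l / l ^ N) * v j) else 0)"
      using l by (auto simp: diag3_def wt_def P_def eval_nat_numeral lessThan_Suc)
  qed
  moreover have "\<forall>v\<in>aff 3. diag3 w0 w1 w2 1 v = v"
    by (auto simp: diag3_def aff_def fun_eq_iff)
  moreover have "diag3 w0 w1 w2 (l * u) v = diag3 w0 w1 w2 l (diag3 w0 w1 w2 u v)"
    if "l \<noteq> 0" "u \<noteq> 0" for l u v
    using that by (auto simp: diag3_def fun_eq_iff power_int_mult_distrib)
  ultimately show ?thesis unfolding lin_gm_rep_def by blast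
qed

lemma power_int_combine:
  "(c::complex) \<noteq> 0 \<Longrightarrow> (c powi a) ^ n * (c powi b) ^ k = c powi (a * int n + b * int k)"
  by (simp add: power_int_power' power_int_add)

definition twisted_hypersurface :: "complex poly \<Rightarrow> nat \<Rightarrow> nat \<Rightarrow> nat \<Rightarrow> (nat \<Rightarrow> complex) set" where
  "twisted_hypersurface f a2 a3 m =
     {p \<in> aff 4. p 0 * poly f (p 0 * p 1) + p 1 ^ m * p 2 ^ a2 + p 3 ^ a3 = 0}"

locale twisted_chart =
  fixes f :: "complex poly" and a2 a3 m :: nat and \<alpha> \<beta> \<gamma> :: int
  assumes f_0: "poly f 0 \<noteq> 0"
    and a2_pos: "a2 > 0" and a3_pos: "a3 > 0"
    and exponents_yz: "int (m + 1) * \<alpha> + int a2 * \<beta> = -1"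
    and exponents_t: "\<alpha> + int a3 * \<gamma> = -1"
begin

definition act :: "complex \<Rightarrow> (nat \<Rightarrow> complex) \<Rightarrow> nat \<Rightarrow> complex" where
  "act = diag4 (int (a2 * a3)) (- int (a2 * a3)) (int ((m + 1) * a3)) (int a2)"

definition den :: "(nat \<Rightarrow> complex) \<Rightarrow> complex" where
  "den p = poly f (p 0 * p 1)"

definition chart :: "(nat \<Rightarrow> complex) set" where
  "chart = twisted_hypersurface f a2 a3 m \<inter> {p \<in> aff 4. den p \<noteq> 0}"

definition xy_lin :: "(nat \<Rightarrow> complex) \<Rightarrow> complex" where
  "xy_lin v = - (v 0 ^ (m + 1) * v 1 ^ a2 + v 0 * v 2 ^ a3)"

definition den_lin :: "(nat \<Rightarrow> complex) \<Rightarrow> complex" where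
  "den_lin v = poly f (xy_lin v)"

definition chart_lin :: "(nat \<Rightarrow> complex) set" where
  "chart_lin = {v \<in> aff 3. den_lin v \<noteq> 0}"

definition act_lin :: "complex \<Rightarrow> (nat \<Rightarrow> complex) \<Rightarrow> nat \<Rightarrow> complex" where
  "act_lin = diag3 (- int (a2 * a3)) (int ((m + 1) * a3)) (int a2)"

definition to_lin :: "(nat \<Rightarrow> complex) \<Rightarrow> nat \<Rightarrow> complex" where
  "to_lin p = (\<lambda>i. if i = 0 then p 1 * den p powi \<alpha> else if i = 1 then p 2 * den p powi \<beta>
      else if i = 2 then p 3 * den p powi \<gamma> else 0)"

definition from_lin :: "(nat \<Rightarrow> complex) \<Rightarrow> nat \<Rightarrow> complex" where
  "from_lin v = (\<lambda>i.
      if i = 0 then - ((v 0 * den_lin v powi - \<alpha>) ^ m * (v 1 * den_lin v powi - \<beta>) ^ a2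
                       + (v 2 * den_lin v powi - \<gamma>) ^ a3) / den_lin v
      else if i = 1 then v 0 * den_lin v powi - \<alpha>
      else if i = 2 then v 1 * den_lin v powi - \<beta>
      else if i = 3 then v 2 * den_lin v powi - \<gamma> else 0)"

lemma to_lin_simps:
  "to_lin p 0 = p 1 * den p powi \<alpha>" "to_lin p 1 = p 2 * den p powi \<beta>"
  "to_lin p 2 = p 3 * den p powi \<gamma>" "i \<ge> 3 \<Longrightarrow> to_lin p i = 0"
  by (simp_all add: to_lin_def)

lemma from_lin_simps:
  "from_lin v 1 = v 0 * den_lin v powi - \<alpha>" "from_lin v 2 = v 1 * den_lin v powi - \<beta>"
  "from_lin v 3 = v 2 * den_lin v powi - \<gamma>" "i \<ge> 4 \<Longrightarrow> from_lin v i = 0"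
  "from_lin v 0 = - (from_lin v 1 ^ m * from_lin v 2 ^ a2 + from_lin v 3 ^ a3) / den_lin v"
  by (simp_all add: from_lin_def)

lemma to_lin_aff: "to_lin p \<in> aff 3"
  by (simp add: to_lin_def aff_def)

lemma from_lin_aff: "from_lin v \<in> aff 4"
  by (simp add: from_lin_def aff_def)

lemma mem_chart_iff:
  "p \<in> chart \<longleftrightarrow> p \<in> aff 4 \<and> den p \<noteq> 0 \<and> p 0 * den p + p 1 ^ m * p 2 ^ a2 + p 3 ^ a3 = 0"
  by (auto simp: chart_def twisted_hypersurface_def den_def)

lemma chart_solve_x:
  "p \<in> chart \<Longrightarrow> p 1 ^ m * p 2 ^ a2 + p 3 ^ a3 = - (p 0 * den p)"
  by (simp add: mem_chart_iff eq_neg_iff_add_eq_0 algebra_simps)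

lemma den_act: "l \<noteq> 0 \<Longrightarrow> den (act l p) = den p"
  by (simp add: den_def act_def diag4_def algebra_simps power_int_minus)

lemma act_chart:
  assumes l: "l \<noteq> 0" and p: "p \<in> chart"
  shows "act l p \<in> chart"
proof -
  let ?N = "int (a2 * a3)"
  have wt_yz: "(l powi - ?N) ^ m * (l powi int ((m + 1) * a3)) ^ a2 = l powi ?N"
    using power_int_combine[OF l, of "- ?N" m "int ((m + 1) * a3)" a2] by (simp add: algebra_simps)
  have wt_t: "(l powi int a2) ^ a3 = l powi ?N"
    using power_int_combine[OF l, of 0 0 "int a2" a3] by (simp add: mult.commute)
  have "act l p 0 * den (act l p) + act l p 1 ^ m * act l p 2 ^ a2 + act l p 3 ^ a3
      = l powi ?N * p 0 * den p + ((l powi - ?N) ^ m * (l powi int ((m + 1) * a3)) ^ a2) * (p 1 ^ m * p 2 ^ a2)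
        + (l powi int a2) ^ a3 * p 3 ^ a3"
    unfolding den_act[OF l] by (simp add: act_def diag4_def power_mult_distrib algebra_simps)
  also have "\<dots> = l powi ?N * (p 0 * den p + p 1 ^ m * p 2 ^ a2 + p 3 ^ a3)"
    unfolding wt_yz wt_t by (simp add: algebra_simps)
  finally show ?thesis
    using p den_act[OF l] by (auto simp: mem_chart_iff act_def diag4_def aff_def)
qed

lemma xy_lin_act_lin:
  assumes l: "l \<noteq> 0"
  shows "xy_lin (act_lin l v) = xy_lin v"
proof -
  let ?N = "int (a2 * a3)"
  have wt_yz: "(l powi - ?N) ^ (m + 1) * (l powi int ((m + 1) * a3)) ^ a2 = 1"
    using power_int_combine[OF l, of "- ?N" "m + 1" "int ((m + 1) * a3)" a2] by (simp add: algebra_simps)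
  have wt_t: "l powi - ?N * (l powi int a2) ^ a3 = 1"
    using power_int_combine[OF l, of "- ?N" 1 "int a2" a3] by simp
  have "xy_lin (act_lin l v) = - (((l powi - ?N) ^ (m + 1) * (l powi int ((m + 1) * a3)) ^ a2) * (v 0 ^ (m + 1) * v 1 ^ a2)
      + (l powi - ?N * (l powi int a2) ^ a3) * (v 0 * v 2 ^ a3))"
    unfolding xy_lin_def act_lin_def diag3_def by (simp add: power_mult_distrib algebra_simps)
  then show ?thesis
    unfolding wt_yz wt_t by (simp add: xy_lin_def)
qed

lemma act_lin_chart_lin:
  assumes "l \<noteq> 0" and "v \<in> chart_lin"
  shows "act_lin l v \<in> chart_lin"
proof -
  have "act_lin l v \<in> aff 3"
    by (simp add: aff_def act_lin_def diag3_def)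
  then show ?thesis
    using assms by (simp add: chart_lin_def den_lin_def xy_lin_act_lin)
qed

lemma to_lin_act: "l \<noteq> 0 \<Longrightarrow> to_lin (act l p) = act_lin l (to_lin p)"
  unfolding to_lin_def den_act act_lin_def diag3_def by (auto simp: act_def diag4_def fun_eq_iff)

lemma twist_yz: "(c::complex) \<noteq> 0 \<Longrightarrow> (c powi \<alpha>) ^ (m + 1) * (c powi \<beta>) ^ a2 = inverse c"
  using power_int_combine[of c \<alpha> "m + 1" \<beta> a2] exponents_yz by (simp add: algebra_simps)

lemma twist_t: "(c::complex) \<noteq> 0 \<Longrightarrow> c powi \<alpha> * (c powi \<gamma>) ^ a3 = inverse c"
  using power_int_combine[of c \<alpha> 1 \<gamma> a3] exponents_t by (simp add: algebra_simps)

lemma untwist_yz: "(c::complex) \<noteq> 0 \<Longrightarrow> (c powi - \<alpha>) ^ (m + 1) * (c powi - \<beta>) ^ a2 = c"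
proof -
  have "- \<alpha> * int (m + 1) + - \<beta> * int a2 = 1"
    using exponents_yz by (simp add: algebra_simps)
  then show "c \<noteq> 0 \<Longrightarrow> ?thesis"
    using power_int_combine[of c "- \<alpha>" "m + 1" "- \<beta>" a2] by simp
qed

lemma untwist_t: "(c::complex) \<noteq> 0 \<Longrightarrow> c powi - \<alpha> * (c powi - \<gamma>) ^ a3 = c"
proof -
  have "- \<alpha> * int 1 + - \<gamma> * int a3 = 1"
    using exponents_t by (simp add: algebra_simps)
  then show "c \<noteq> 0 \<Longrightarrow> ?thesis"
    using power_int_combine[of c "- \<alpha>" 1 "- \<gamma>" a3] by simp
qed

lemma xy_lin_to_lin:
  assumes p: "p \<in> chart"
  shows "xy_lin (to_lin p) = p 0 * p 1"
proof -
  have c: "den p \<noteq> 0"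
    using p by (simp add: mem_chart_iff)
  have "xy_lin (to_lin p) = - (((den p powi \<alpha>) ^ (m + 1) * (den p powi \<beta>) ^ a2) * (p 1 ^ (m + 1) * p 2 ^ a2)
      + (den p powi \<alpha> * (den p powi \<gamma>) ^ a3) * (p 1 * p 3 ^ a3))"
    unfolding xy_lin_def to_lin_simps by (simp add: power_mult_distrib algebra_simps)
  also have "\<dots> = - (inverse (den p) * p 1 * (p 1 ^ m * p 2 ^ a2 + p 3 ^ a3))"
    unfolding twist_yz[OF c] twist_t[OF c] by (simp add: algebra_simps)
  also have "\<dots> = p 0 * p 1"
    unfolding chart_solve_x[OF p] using c by (simp add: field_simps)
  finally show ?thesis .
qed

lemma xy_from_lin:
  assumes d: "den_lin v \<noteq> 0"
  shows "from_lin v 0 * from_lin v 1 = xy_lin v"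
proof -
  have "from_lin v 0 * from_lin v 1
      = - (from_lin v 1 ^ (m + 1) * from_lin v 2 ^ a2 + from_lin v 1 * from_lin v 3 ^ a3) / den_lin v"
    unfolding from_lin_simps(5)[of v] by (simp add: field_simps)
  also have "from_lin v 1 ^ (m + 1) * from_lin v 2 ^ a2
      = ((den_lin v powi - \<alpha>) ^ (m + 1) * (den_lin v powi - \<beta>) ^ a2) * (v 0 ^ (m + 1) * v 1 ^ a2)"
    unfolding from_lin_simps by (simp add: power_mult_distrib algebra_simps)
  also have "from_lin v 1 * from_lin v 3 ^ a3
      = (den_lin v powi - \<alpha> * (den_lin v powi - \<gamma>) ^ a3) * (v 0 * v 2 ^ a3)"
    unfolding from_lin_simps by (simp add: power_mult_distrib algebra_simps)
  finally have "from_lin v 0 * from_lin v 1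
      = - (den_lin v * (v 0 ^ (m + 1) * v 1 ^ a2) + den_lin v * (v 0 * v 2 ^ a3)) / den_lin v"
    unfolding untwist_yz[OF d] untwist_t[OF d] .
  also have "\<dots> = - (v 0 ^ (m + 1) * v 1 ^ a2 + v 0 * v 2 ^ a3)"
    using d by (simp add: field_simps)
  finally show ?thesis
    unfolding xy_lin_def .
qed

lemma den_to_lin: "p \<in> chart \<Longrightarrow> den_lin (to_lin p) = den p"
  by (simp add: den_lin_def den_def xy_lin_to_lin)

lemma den_from_lin: "den_lin v \<noteq> 0 \<Longrightarrow> den (from_lin v) = den_lin v"
  using xy_from_lin by (simp add: den_def den_lin_def)

lemma from_to_lin:
  assumes p: "p \<in> chart"
  shows "from_lin (to_lin p) = p"
proof
  fix i :: nat
  have c: "den p \<noteq> 0" and pa: "p \<in> aff 4"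
    using p by (auto simp: mem_chart_iff)
  have yzt: "from_lin (to_lin p) 1 = p 1" "from_lin (to_lin p) 2 = p 2" "from_lin (to_lin p) 3 = p 3"
    unfolding from_lin_simps den_to_lin[OF p] to_lin_simps
    using c by (simp_all add: mult.assoc power_int_minus)
  have "from_lin (to_lin p) 0 = - (p 1 ^ m * p 2 ^ a2 + p 3 ^ a3) / den p"
    by (subst from_lin_simps(5)) (simp only: yzt den_to_lin[OF p])
  then have "from_lin (to_lin p) 0 = p 0"
    unfolding chart_solve_x[OF p] using c by simp
  moreover have "i = 0 \<or> i = 1 \<or> i = 2 \<or> i = 3" if "i < 4"
    using that by auto
  ultimately show "from_lin (to_lin p) i = p i"
    using yzt pa from_lin_simps(4) by (cases "i < 4") (auto simp: aff_def)
qed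

lemma to_from_lin:
  assumes v: "v \<in> chart_lin"
  shows "to_lin (from_lin v) = v"
proof
  fix i :: nat
  have d: "den_lin v \<noteq> 0" and va: "v \<in> aff 3"
    using v by (auto simp: chart_lin_def)
  have "to_lin (from_lin v) 0 = v 0" "to_lin (from_lin v) 1 = v 1" "to_lin (from_lin v) 2 = v 2"
    unfolding to_lin_simps den_from_lin[OF d] from_lin_simps
    using d by (simp_all add: mult.assoc power_int_minus)
  moreover have "i = 0 \<or> i = 1 \<or> i = 2" if "i < 3"
    using that by auto
  ultimately show "to_lin (from_lin v) i = v i"
    using va to_lin_simps(4) by (cases "i < 3") (auto simp: aff_def)
qed

lemma to_lin_chart: "p \<in> chart \<Longrightarrow> to_lin p \<in> chart_lin"
  using to_lin_aff by (simp add: chart_lin_def den_to_lin mem_chart_iff)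

lemma from_lin_chart:
  assumes v: "v \<in> chart_lin"
  shows "from_lin v \<in> chart"
proof -
  have d: "den_lin v \<noteq> 0"
    using v by (simp add: chart_lin_def)
  have "from_lin v 0 * den_lin v = - (from_lin v 1 ^ m * from_lin v 2 ^ a2 + from_lin v 3 ^ a3)"
    using d by (subst from_lin_simps(5)) simp
  then have "from_lin v 0 * den (from_lin v) + from_lin v 1 ^ m * from_lin v 2 ^ a2 + from_lin v 3 ^ a3 = 0"
    unfolding den_from_lin[OF d] by (simp add: algebra_simps)
  then show ?thesis
    using d den_from_lin[OF d] from_lin_aff by (simp add: mem_chart_iff)
qed

lemma origin_chart: "origin \<in> chart"
  using f_0 a2_pos a3_pos by (simp add: mem_chart_iff den_def origin_def aff_def zero_power)

lemma zariski_open_den: "zariski_open 4 {p \<in> aff 4. den p \<noteq> 0}"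
  unfolding den_def by (intro zariski_open_nonzero polyfun_poly pf_mult pf_var) simp_all

lemma zariski_open_chart_lin: "zariski_open 3 chart_lin"
  unfolding chart_lin_def den_lin_def xy_lin_def
  by (intro zariski_open_nonzero polyfun_poly polyfun_uminus pf_add pf_mult polyfun_power pf_var) simp_all

lemma regular_map_to_lin: "regular_map 4 3 chart to_lin"
proof (rule regular_map_rational)
  have "rational_on 4 chart den"
    unfolding den_def by (intro rational_on_poly rational_on_mult rational_on_var) simp_all
  moreover have "\<forall>q\<in>chart. den q \<noteq> 0"
    by (simp add: mem_chart_iff)
  ultimately have twisted: "rational_on 4 chart (\<lambda>q. q j * den q powi k)" if "j < 4" for j k
    using that by (intro rational_on_mult rational_on_var rational_on_power_int)
  fix i :: nat
  assume "i < 3"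
  then have "i = 0 \<or> i = 1 \<or> i = 2"
    by auto
  then show "rational_on 4 chart (\<lambda>q. to_lin q i)"
    using twisted[of 1 \<alpha>] twisted[of 2 \<beta>] twisted[of 3 \<gamma>] unfolding to_lin_def by auto
qed (auto simp: mem_chart_iff to_lin_aff)

lemma regular_map_from_lin: "regular_map 3 4 chart_lin from_lin"
proof (rule regular_map_rational)
  have den: "rational_on 3 chart_lin den_lin"
    unfolding den_lin_def xy_lin_def
    by (intro rational_on_poly rational_on_uminus rational_on_add rational_on_mult rational_on_power
        rational_on_var) simp_all
  have nz: "\<forall>v\<in>chart_lin. den_lin v \<noteq> 0"
    by (simp add: chart_lin_def)
  have twisted: "rational_on 3 chart_lin (\<lambda>v. v j * den_lin v powi k)" if "j < 3" for j k
    using that den nz by (intro rational_on_mult rational_on_var rational_on_power_int)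
  have yzt: "rational_on 3 chart_lin (\<lambda>v. from_lin v 1)" "rational_on 3 chart_lin (\<lambda>v. from_lin v 2)"
      "rational_on 3 chart_lin (\<lambda>v. from_lin v 3)"
    using twisted[of 0 "- \<alpha>"] twisted[of 1 "- \<beta>"] twisted[of 2 "- \<gamma>"]
    unfolding from_lin_simps by simp_all
  have x: "rational_on 3 chart_lin (\<lambda>v. from_lin v 0)"
    by (subst from_lin_simps(5), intro rational_on_divide rational_on_uminus rational_on_add
        rational_on_mult rational_on_power yzt den nz)
  fix i :: nat
  assume "i < 4"
  then have "i = 0 \<or> i = 1 \<or> i = 2 \<or> i = 3"
    by auto
  then show "rational_on 3 chart_lin (\<lambda>v. from_lin v i)"
    using x yzt by auto
qed (auto simp: chart_lin_def from_lin_aff)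

theorem gm_linearly_rational_twisted_hypersurface:
  "gm_linearly_rational 4 (twisted_hypersurface f a2 a3 m) act origin"
  unfolding gm_linearly_rational_def
proof (intro exI conjI)
  show "zariski_open 4 {p \<in> aff 4. den p \<noteq> 0}"
    by (rule zariski_open_den)
  show "chart = twisted_hypersurface f a2 a3 m \<inter> {p \<in> aff 4. den p \<noteq> 0}"
    by (rule chart_def)
  show "lin_gm_rep 3 act_lin"
    unfolding act_lin_def by (rule lin_gm_rep_diag3)
qed (use origin_chart act_chart zariski_open_chart_lin act_lin_chart_lin regular_map_to_lin
      regular_map_from_lin to_lin_chart from_lin_chart from_to_lin to_from_lin to_lin_act in auto)

end

lemma twist_exponents:
  fixes a2 a3 m :: nat
  assumes "coprime ((m + 1) * a3) a2"
  obtains \<alpha> \<beta> \<gamma> :: int where "int (m + 1) * \<alpha> + int a2 * \<beta> = -1" and "\<alpha> + int a3 * \<gamma> = -1"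
proof -
  have "coprime (int ((m + 1) * a3)) (int a2)"
    using assms by (simp only: coprime_int_iff)
  then obtain u v :: int where uv: "u * int ((m + 1) * a3) + v * int a2 = 1"
    using bezout_int[of "int ((m + 1) * a3)" "int a2"] by (auto simp: coprime_iff_gcd_eq_1)
  define \<gamma> where "\<gamma> = - int m * u"
  have "int (m + 1) * (- 1 - int a3 * \<gamma>) + int a2 * (int m * v)
      = - int (m + 1) + int m * (u * int ((m + 1) * a3) + v * int a2)"
    by (simp add: \<gamma>_def algebra_simps)
  with uv have "int (m + 1) * (- 1 - int a3 * \<gamma>) + int a2 * (int m * v) = -1"
    by simp
  then show ?thesis
    using that[of "- 1 - int a3 * \<gamma>" "int m * v" \<gamma>] by simp
qed

lemma gm_linearly_rational_twisted_hypersurface_coprime: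
  fixes f :: "complex poly" and a2 a3 m :: nat
  assumes "poly f 0 \<noteq> 0" and "a2 > 0" and "a3 > 0" and "coprime ((m + 1) * a3) a2"
  shows "gm_linearly_rational 4 (twisted_hypersurface f a2 a3 m)
           (diag4 (int (a2 * a3)) (- int (a2 * a3)) (int ((m + 1) * a3)) (int a2)) origin"
proof -
  obtain \<alpha> \<beta> \<gamma> where "int (m + 1) * \<alpha> + int a2 * \<beta> = -1" and "\<alpha> + int a3 * \<gamma> = -1"
    using twist_exponents[OF assms(4)] .
  then interpret twisted_chart f a2 a3 m \<alpha> \<beta> \<gamma>
    using assms by unfold_locales
  show ?thesis
    using gm_linearly_rational_twisted_hypersurface by (simp add: act_def)
qed

lemma X1_eq_twisted_hypersurface:
  assumes "k > 0"
  shows "X1 a2 a3 k = twisted_hypersurface (1 + monom 1 (k - 1)) a2 a3 0"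
proof -
  have "p 0 + p 0 ^ k * p 1 ^ (k - 1) + p 2 ^ a2 + p 3 ^ a3
      = p 0 * poly (1 + monom 1 (k - 1)) (p 0 * p 1) + p 1 ^ 0 * p 2 ^ a2 + p 3 ^ a3"
    for p :: "nat \<Rightarrow> complex"
    using assms by (cases k) (simp_all add: poly_monom power_mult_distrib algebra_simps)
  then show ?thesis
    by (simp only: X1_def twisted_hypersurface_def)
qed

lemma X2_eq_twisted_hypersurface:
  assumes "d > 0"
  shows "X2 a2 a3 d = twisted_hypersurface (1 + monom 1 (d - 1)) a2 a3 (d - 1)"
proof -
  have "p 0 + p 1 ^ (d - 1) * (p 0 ^ d + p 2 ^ a2) + p 3 ^ a3
      = p 0 * poly (1 + monom 1 (d - 1)) (p 0 * p 1) + p 1 ^ (d - 1) * p 2 ^ a2 + p 3 ^ a3"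
    for p :: "nat \<Rightarrow> complex"
    using assms by (cases d) (simp_all add: poly_monom power_mult_distrib algebra_simps)
  then show ?thesis
    by (simp only: X2_def twisted_hypersurface_def)
qed

theorem proposition3p5:
  fixes a2 a3 k d :: nat
  assumes "a2 > 0" and "a3 > 0" and "k > 0" and "coprime a2 a3"
  shows "gm_linearly_rational 4 (X1 a2 a3 k)
           (diag4 (int (a2 * a3)) (- int (a2 * a3)) (int a3) (int a2)) origin
       \<and> (d \<ge> 2 \<longrightarrow> coprime (d * a3) a2 \<longrightarrow>
         gm_linearly_rational 4 (X2 a2 a3 d)
           (diag4 (int (a2 * a3)) (- int (a2 * a3)) (int (d * a3)) (int a2)) origin)"
proof (intro conjI impI)
  have "poly (1 + monom 1 j) 0 \<noteq> (0::complex)" for j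
    by (cases j) (simp_all add: poly_monom)
  note twisted = gm_linearly_rational_twisted_hypersurface_coprime[OF this \<open>a2 > 0\<close> \<open>a3 > 0\<close>]
  show "gm_linearly_rational 4 (X1 a2 a3 k)
      (diag4 (int (a2 * a3)) (- int (a2 * a3)) (int a3) (int a2)) origin"
    using twisted[of 0] \<open>coprime a2 a3\<close> X1_eq_twisted_hypersurface[OF \<open>k > 0\<close>] by (simp add: coprime_commute)
  assume "d \<ge> 2" and "coprime (d * a3) a2"
  then show "gm_linearly_rational 4 (X2 a2 a3 d)
      (diag4 (int (a2 * a3)) (- int (a2 * a3)) (int (d * a3)) (int a2)) origin"
    using twisted[of "d - 1"] X2_eq_twisted_hypersurface[of d] by simp
qed

end
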